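(* For $0<p<1$ let $\Delta_p\subset\mathbf R^2$ be the quadrilateral with vertices $(0,0),(p,0),(p,1-p),(0,1)$, let $U_p=\{(a,b,c): a\mu_1+b\mu_2+c>0 \text{ on }\Delta_p\}$, and let $$E_p(a,b,c)=8\pi^2\,\frac{\left(\int_{\partial\Delta_p}(a\mu_1+b\mu_2+c)^{-2}\,d\sigma\right)^2}{\int_{\Delta_p}(a\mu_1+b\mu_2+c)^{-4}\,d\mu}$$ on $U_p/\mathbf R_+$. Then: (i) for every $0<p<1$, $\left[\left(1,0,\frac{p(1-\sqrt{1-p})}{2\sqrt{1-p}+p-2}\right)\right]$ is a critical point of $E_p$; (ii) for $\frac89<p<1$, the two points $\left[\left(-1,0,\frac{p(3p\pm\sqrt{9p^2-8p})}{2(p\pm\sqrt{9p^2-8p})}\right)\right]$ are also critical points of $E_p$; (iii) letting $0<\alpha<\beta<1$ be the real roots of $F(p)=p^4-4p^3+16p^2-16p+4$, for $0<p<\alpha$ the two points $\left[\left(p^2-4p+2\pm\sqrt{F(p)},\,\pm2\sqrt{F(p)},\,p^2+2p-2\mp\sqrt{F(p)}\right)\right]$ are also critical points of $E_p$.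
   Context: $d\mu$ is Lebesgue measure on $\Delta_p$ and $d\sigma$ is the standard boundary measure for a Delzant polytope (on each facet, $d\mu = d\sigma\wedge d\ell$ where $\ell$ is the affine function defining the facet with primitive integral inward normal). $E_p$ is invariant under positive scaling of $(a,b,c)$ and is the square of the normalized Einstein–Hilbert functional of the conformal metric $f^{-2}g$ on the toric one-point blow-up of $\mathbf{CP}^2$ with moment polytope $\Delta_p$ and $f=a\mu_1+b\mu_2+c$. *)

theory Defs
  imports "HOL-Analysis.Analysis"
begin

definition Delta :: "real \<Rightarrow> (real \<times> real) set" where
  "Delta p = {(x, y). 0 \<le> x \<and> x \<le> p \<and> 0 \<le> y \<and> x + y \<le> 1}"

definition affn :: "real \<times> real \<times> real \<Rightarrow> real \<Rightarrow> real \<Rightarrow> real" where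
  "affn v x y = fst v * x + fst (snd v) * y + snd (snd v)"

definition U :: "real \<Rightarrow> (real \<times> real \<times> real) set" where
  "U p = {v. \<forall>(x, y) \<in> Delta p. affn v x y > 0}"

text \<open>Standard boundary measure of the Delzant polytope Delta p, written out facet by facet:
  on each facet d mu = d sigma wedge d l, with l the defining affine function with primitive
  inward normal.  Facets: mu2 = 0 (l = mu2, d sigma = d mu1 on [0,p]);
  mu1 = p (l = p - mu1, d sigma = d mu2 on [0,1-p]);
  mu1 + mu2 = 1 (l = 1 - mu1 - mu2, d sigma = d mu1 on [0,p]);
  mu1 = 0 (l = mu1, d sigma = d mu2 on [0,1]).\<close>
definition bdry_integral :: "real \<Rightarrow> (real \<Rightarrow> real \<Rightarrow> real) \<Rightarrow> real" where
  "bdry_integral p g =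
     integral {0..p} (\<lambda>t. g t 0) + integral {0..1-p} (\<lambda>t. g p t)
   + integral {0..p} (\<lambda>t. g t (1 - t)) + integral {0..1} (\<lambda>t. g 0 t)"

definition E :: "real \<Rightarrow> real \<times> real \<times> real \<Rightarrow> real" where
  "E p v = 8 * pi\<^sup>2 * (bdry_integral p (\<lambda>x y. (affn v x y) powi (-2)))\<^sup>2
             / integral (Delta p) (\<lambda>(x, y). (affn v x y) powi (-4))"

text \<open>Critical point (E p is scale invariant, so this is criticality on U p / R_+).\<close>
definition critical :: "real \<Rightarrow> real \<times> real \<times> real \<Rightarrow> bool" where
  "critical p v \<longleftrightarrow> (E p has_derivative (\<lambda>h. 0)) (at v)"

definition F :: "real \<Rightarrow> real" where
  "F p = p^4 - 4*p^3 + 16*p^2 - 16*p + 4"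

end

theory Submission
  imports Defs
begin

text \<open>Both integrals in \<open>E p\<close> can be computed in closed form from the values \<open>f1, \<dots>, f4\<close> of the
  affine function at the four vertices of \<open>Delta p\<close>: an edge of lattice length \<open>L\<close> between vertices
  \<open>i, j\<close> contributes \<open>L / (fi * fj)\<close>, and iterated integration gives the area integral. Hence
  \<open>E p = 48 \<pi>\<^sup>2 B(f)\<^sup>2 / D(f)\<close> for explicit polynomials \<open>B, D\<close>, valid on the open set where all vertex
  values have one sign (there the affine function has no zero on \<open>Delta p\<close>). The vertex values depend
  linearly on \<open>(a, b, c)\<close>, so criticality reduces to the polynomial identity \<open>2 D dB = B dD\<close> in every
  direction; for each family this identity lies in the ideal generated by the relation defining the
  point (\<open>s\<^sup>2 = 1 - p\<close>, the quadratic equation for \<open>c\<close>, resp. \<open>t\<^sup>2 = F p\<close>) and is checked by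
  Groebner-basis normalization.\<close>

section \<open>Positivity on the quadrilateral\<close>

lemma affn_uminus [simp]: "affn (- w) x y = - affn w x y"
  by (cases w) (simp add: affn_def)

lemma continuous_on_affn [continuous_intros]: "continuous_on S (\<lambda>w. affn w x y)"
  unfolding affn_def by (intro continuous_intros)

lemma convex_combination_pos:
  fixes a b l :: real
  assumes "0 < a" "0 < b" "0 \<le> l" "l \<le> 1"
  shows "0 < (1 - l) * a + l * b"
proof (cases "l = 1")
  case False
  then show ?thesis using assms by (intro add_pos_nonneg) auto
qed (use assms in simp)

lemma vertices_in_Delta:
  assumes "0 < p" "p < 1"
  shows "(0, 0) \<in> Delta p" "(p, 0) \<in> Delta p" "(p, 1 - p) \<in> Delta p" "(0, 1) \<in> Delta p"
  using assms unfolding Delta_def by auto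

lemma affn_pos_on_Delta:
  assumes p: "0 < p" "p < 1"
    and pos: "0 < affn w 0 0" "0 < affn w p 0" "0 < affn w p (1 - p)" "0 < affn w 0 1"
    and xy: "(x, y) \<in> Delta p"
  shows "0 < affn w x y"
proof -
  have x: "0 \<le> x" "x \<le> p" "0 \<le> y" "y \<le> 1 - x" using xy unfolding Delta_def by auto
  define l where "l = x / p"
  have l: "0 \<le> l" "l \<le> 1" "l * p = x" using x p unfolding l_def by (auto simp: field_simps)
  have "affn w x 0 = (1 - l) * affn w 0 0 + l * affn w p 0"
    unfolding l(3)[symmetric] by (cases w) (simp add: affn_def algebra_simps)
  then have bottom: "0 < affn w x 0" using l pos by (simp add: convex_combination_pos)
  have "affn w x (1 - x) = (1 - l) * affn w 0 1 + l * affn w p (1 - p)"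
    unfolding l(3)[symmetric] by (cases w) (simp add: affn_def algebra_simps)
  then have top: "0 < affn w x (1 - x)" using l pos by (simp add: convex_combination_pos)
  define m where "m = y / (1 - x)"
  have m: "0 \<le> m" "m \<le> 1" "m * (1 - x) = y" using x p unfolding m_def by (auto simp: field_simps)
  have "affn w x y = (1 - m) * affn w x 0 + m * affn w x (1 - x)"
    unfolding m(3)[symmetric] by (cases w) (simp add: affn_def algebra_simps)
  then show ?thesis using m bottom top by (simp add: convex_combination_pos)
qed

lemma U_iff_vertices_pos:
  assumes "0 < p" "p < 1"
  shows "w \<in> U p \<longleftrightarrow> 0 < affn w 0 0 \<and> 0 < affn w p 0 \<and> 0 < affn w p (1 - p) \<and> 0 < affn w 0 1"
  using affn_pos_on_Delta[OF assms] vertices_in_Delta[OF assms] unfolding U_def by fast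

lemma open_U:
  assumes "0 < p" "p < 1"
  shows "open (U p)"
proof -
  have "U p = {w. 0 < affn w 0 0} \<inter> {w. 0 < affn w p 0} \<inter> {w. 0 < affn w p (1 - p)} \<inter> {w. 0 < affn w 0 1}"
    using U_iff_vertices_pos[OF assms] by blast
  then show ?thesis by (simp only:) (intro open_Int open_Collect_less continuous_intros)
qed

section \<open>The integrals in closed form\<close>

lemma integral_affine_powi_minus2:
  fixes a b L :: real
  assumes L: "0 \<le> L" and nz: "\<And>t. 0 \<le> t \<Longrightarrow> t \<le> L \<Longrightarrow> a*t + b \<noteq> 0"
  shows "integral {0..L} (\<lambda>t. (a*t + b) powi (-2)) = L / (b * (a*L + b))"
proof -
  define G where "G t = t / (b * (a*t + b))" for t
  have b: "b \<noteq> 0" using nz[of 0] L by simp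
  have "((\<lambda>t. (a*t + b) powi (-2)) has_integral (G L - G 0)) {0..L}"
  proof (rule fundamental_theorem_of_calculus[OF L])
    fix t assume "t \<in> {0..L}"
    then have t: "a*t + b \<noteq> 0" using nz by auto
    have "(G has_real_derivative (b*(a*t + b) - t*(b*a)) / (b*(a*t + b))\<^sup>2) (at t)"
      unfolding G_def using t b by (auto intro!: derivative_eq_intros simp: power2_eq_square)
    moreover have "(b*(a*t + b) - t*(b*a)) / (b*(a*t + b))\<^sup>2 = (a*t + b) powi (-2)"
      using t b by (simp add: power_int_minus power2_eq_square divide_simps) (simp add: algebra_simps)
    ultimately have "(G has_real_derivative (a*t + b) powi (-2)) (at t)" by simp
    then show "(G has_vector_derivative (a*t + b) powi (-2)) (at t within {0..L})"
      using has_real_derivative_iff_has_vector_derivative has_vector_derivative_at_within by blast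
  qed
  then show ?thesis unfolding G_def by (simp add: integral_unique)
qed

lemma integral_affine_powi_minus4:
  fixes a b L :: real
  assumes L: "0 \<le> L" and nz: "\<And>t. 0 \<le> t \<Longrightarrow> t \<le> L \<Longrightarrow> a*t + b \<noteq> 0"
  shows "integral {0..L} (\<lambda>t. (a*t + b) powi (-4))
           = L * (b^2 + b*(a*L + b) + (a*L + b)^2) / (3 * b^3 * (a*L + b)^3)"
proof -
  define G where "G t = t * (b^2 + b*(a*t + b) + (a*t + b)^2) / (3 * b^3 * (a*t + b)^3)" for t
  have b: "b \<noteq> 0" using nz[of 0] L by simp
  have "((\<lambda>t. (a*t + b) powi (-4)) has_integral (G L - G 0)) {0..L}"
  proof (rule fundamental_theorem_of_calculus[OF L])
    fix t assume "t \<in> {0..L}"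
    then have t: "a*t + b \<noteq> 0" using nz by auto
    have "(G has_real_derivative (a*t + b) powi (-4)) (at t)"
      unfolding G_def
      apply (rule DERIV_cong)
       apply (rule derivative_eq_intros refl)+
      using t b apply (simp_all add: power_int_minus)
      apply (simp add: field_simps)
      apply algebra
      done
    then show "(G has_vector_derivative (a*t + b) powi (-4)) (at t within {0..L})"
      using has_real_derivative_iff_has_vector_derivative has_vector_derivative_at_within by blast
  qed
  then show ?thesis unfolding G_def by (simp add: integral_unique)
qed

lemma integral_affn_segment_powi_minus2:
  assumes L: "0 \<le> L" and nz: "\<And>t. 0 \<le> t \<Longrightarrow> t \<le> L \<Longrightarrow> affn w (x0 + t*dx) (y0 + t*dy) \<noteq> 0"
  shows "integral {0..L} (\<lambda>t. affn w (x0 + t*dx) (y0 + t*dy) powi (-2))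
           = L / (affn w x0 y0 * affn w (x0 + L*dx) (y0 + L*dy))"
proof -
  obtain a b c where w: "w = (a, b, c)" by (cases w)
  have affine: "affn w (x0 + t*dx) (y0 + t*dy) = (a*dx + b*dy) * t + affn w x0 y0" for t
    by (simp add: w affn_def algebra_simps)
  show ?thesis
    using integral_affine_powi_minus2[OF L] nz by (simp add: affine)
qed

lemma bdry_integral_affn_powi_minus2:
  assumes p: "0 < p" "p < 1" and nz: "\<And>x y. (x, y) \<in> Delta p \<Longrightarrow> affn w x y \<noteq> 0"
  shows "bdry_integral p (\<lambda>x y. affn w x y powi (-2)) =
           p / (affn w 0 0 * affn w p 0) + (1 - p) / (affn w p 0 * affn w p (1 - p))
         + p / (affn w 0 1 * affn w p (1 - p)) + 1 / (affn w 0 0 * affn w 0 1)"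
proof -
  have edges: "\<And>t. 0 \<le> t \<Longrightarrow> t \<le> p \<Longrightarrow> (t, 0) \<in> Delta p"
    "\<And>t. 0 \<le> t \<Longrightarrow> t \<le> 1 - p \<Longrightarrow> (p, t) \<in> Delta p"
    "\<And>t. 0 \<le> t \<Longrightarrow> t \<le> p \<Longrightarrow> (t, 1 - t) \<in> Delta p"
    "\<And>t. 0 \<le> t \<Longrightarrow> t \<le> 1 \<Longrightarrow> (0, t) \<in> Delta p"
    using p unfolding Delta_def by auto
  show ?thesis
    unfolding bdry_integral_def
    using integral_affn_segment_powi_minus2[of p w 0 1 0 0] integral_affn_segment_powi_minus2[of "1 - p" w p 0 0 1]
      integral_affn_segment_powi_minus2[of p w 0 1 1 "-1"] integral_affn_segment_powi_minus2[of 1 w 0 0 0 1]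
      p nz edges by simp
qed

lemma compact_Delta: "compact (Delta p)"
proof -
  have "Delta p = ({0..p} \<times> {0..1}) \<inter> {z. fst z + snd z \<le> 1}"
    unfolding Delta_def by auto
  moreover have "closed {z::real \<times> real. fst z + snd z \<le> 1}"
    by (intro closed_Collect_le continuous_intros)
  ultimately show ?thesis
    by (metis compact_Icc compact_Times closed_Int_compact Int_commute)
qed

lemma integral_Delta_iterated:
  fixes g :: "real \<times> real \<Rightarrow> real"
  assumes g: "continuous_on (Delta p) g"
  shows "integral (Delta p) g = integral {0..p} (\<lambda>x. integral {0..1-x} (\<lambda>y. g (x, y)))"
proof -
  define h where "h x = integral {0..1-x} (\<lambda>y. g (x, y))" for x
  have int: "integrable (lborel \<Otimes>\<^sub>M lborel) (\<lambda>z. indicator (Delta p) z *\<^sub>R g z)"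
    using borel_integrable_compact[OF compact_Delta g] by (simp add: lborel_prod)
  have slice: "(\<integral>y. indicator (Delta p) (x, y) *\<^sub>R g (x, y) \<partial>lborel) = indicator {0..p} x * h x" for x
  proof (cases "x \<in> {0..p}")
    case True
    then have "indicator (Delta p) (x, y) = (indicator {0..1-x} y :: real)" for y
      unfolding Delta_def by (auto simp: indicator_def)
    moreover have "continuous_on {0..1-x} (\<lambda>y. g (x, y))"
      using True by (intro continuous_on_compose2[OF g] continuous_intros) (auto simp: Delta_def)
    then have "(LINT y:{0..1-x}|lborel. g (x, y)) = h x"
      unfolding h_def by (rule set_borel_integral_eq_integral(2)[OF borel_integrable_atLeastAtMost'])
    ultimately show ?thesis using True by (simp add: set_lebesgue_integral_def)
  next
    case False
    then have "indicator (Delta p) (x, y) = (0::real)" for y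
      unfolding Delta_def by (auto simp: indicator_def)
    then show ?thesis using False by simp
  qed
  have "set_integrable lborel {0..p} h"
    using lborel_pair.integrable_fst'[OF int] unfolding slice set_integrable_def
    by (simp add: mult.commute)
  have "integral (Delta p) g = (\<integral>z. indicator (Delta p) z *\<^sub>R g z \<partial>(lborel \<Otimes>\<^sub>M lborel))"
    using set_borel_integral_eq_integral(2)[of "Delta p" g] borel_integrable_compact[OF compact_Delta g]
    by (simp add: set_integrable_def set_lebesgue_integral_def lborel_prod)
  also have "\<dots> = (\<integral>x. (\<integral>y. indicator (Delta p) (x, y) *\<^sub>R g (x, y) \<partial>lborel) \<partial>lborel)"
    by (rule lborel_pair.integral_fst'[OF int, symmetric])
  also have "\<dots> = (\<integral>x. indicator {0..p} x * h x \<partial>lborel)"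
    by (simp only: slice)
  also have "\<dots> = integral {0..p} h"
    using set_borel_integral_eq_integral(2)[OF \<open>set_integrable lborel {0..p} h\<close>]
    by (simp add: set_lebesgue_integral_def)
  finally show ?thesis unfolding h_def .
qed

definition slice_integral :: "real \<Rightarrow> real \<Rightarrow> real \<Rightarrow> real \<Rightarrow> real" where
  "slice_integral a b c x =
     (1 - x)*((a*x + c)^2 + (a*x + c)*(b*(1 - x) + a*x + c) + (b*(1 - x) + a*x + c)^2)
     / (3*(a*x + c)^3*(b*(1 - x) + a*x + c)^3)"

text \<open>\<open>slice_primitive a b c X\<close> is the integral of \<open>(a x + b y + c) powi -4\<close> over the part of the
  triangle \<open>x, y \<ge> 0, x + y \<le> 1\<close> with \<open>x \<le> X\<close>.\<close>

definition slice_primitive :: "real \<Rightarrow> real \<Rightarrow> real \<Rightarrow> real \<Rightarrow> real" where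
  "slice_primitive a b c x =
     (x*(1 - x)*((a*x + c)*(b*(1 - x) + a*x + c) + c*(b*(1 - x) + a*x + c) + c*(a*x + c))*(b + c)^2
      + x*((b*(1 - x) + a*x + c)*(b + c) + c*(b + c) + c*(b*(1 - x) + a*x + c))*(a*x + c)^2)
     / (6*c^2*(a*x + c)^2*(b*(1 - x) + a*x + c)^2*(b + c)^2)"

lemma has_real_derivative_slice_primitive:
  fixes a b c x :: real
  assumes "c \<noteq> 0" "a*x + c \<noteq> 0" "b*(1 - x) + a*x + c \<noteq> 0" "b + c \<noteq> 0"
  shows "(slice_primitive a b c has_real_derivative slice_integral a b c x) (at x)"
proof -
  have denom: "6*c^2*(a*x + c)^2*(b*(1 - x) + a*x + c)^2*(b + c)^2 \<noteq> 0" using assms by simp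
  show ?thesis
    unfolding slice_primitive_def[abs_def] slice_integral_def
    apply (rule DERIV_cong)
     apply (rule derivative_eq_intros refl denom)+
    apply simp
    apply (subst frac_eq_eq)
      using assms apply simp
     using assms apply simp
    apply algebra
    done
qed

text \<open>Here and below \<open>f1, \<dots>, f4\<close> stand for the values of the affine function at the vertices
  \<open>(0,0), (p,0), (p,1-p), (0,1)\<close> of \<open>Delta p\<close>.\<close>

definition area_poly :: "real \<Rightarrow> real \<Rightarrow> real \<Rightarrow> real \<Rightarrow> real \<Rightarrow> real" where
  "area_poly p f1 f2 f3 f4 = p*(1 - p)*(f2*f3 + f1*f3 + f1*f2)*f4^2 + p*(f3*f4 + f1*f4 + f1*f3)*f2^2"

lemma integral_Delta_affn_powi_minus4:
  assumes p: "0 < p" "p < 1" and nz: "\<And>x y. (x, y) \<in> Delta p \<Longrightarrow> affn w x y \<noteq> 0"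
  shows "integral (Delta p) (\<lambda>(x, y). affn w x y powi (-4))
           = area_poly p (affn w 0 0) (affn w p 0) (affn w p (1 - p)) (affn w 0 1)
             / (6 * (affn w 0 0 * affn w p 0 * affn w p (1 - p) * affn w 0 1)^2)"
proof -
  obtain a b c where w: "w = (a, b, c)" by (cases w)
  have A: "a*x + c \<noteq> 0" and B: "b*(1 - x) + a*x + c \<noteq> 0" if "0 \<le> x" "x \<le> p" for x
    using nz[of x 0] nz[of x "1 - x"] that p unfolding Delta_def w affn_def by (auto simp: algebra_simps)
  have c: "c \<noteq> 0" and d: "b + c \<noteq> 0"
    using nz[of 0 0] nz[of 0 1] p unfolding Delta_def w affn_def by auto
  have "continuous_on (Delta p) (\<lambda>(x, y). affn w x y powi (-4))"
    using nz unfolding case_prod_unfold w affn_def by (intro continuous_intros) auto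
  then have "integral (Delta p) (\<lambda>(x, y). affn w x y powi (-4))
               = integral {0..p} (\<lambda>x. integral {0..1-x} (\<lambda>y. affn w x y powi (-4)))"
    by (simp add: integral_Delta_iterated)
  also have "\<dots> = integral {0..p} (slice_integral a b c)"
  proof (rule integral_cong)
    fix x assume x: "x \<in> {0..p}"
    have "integral {0..1-x} (\<lambda>y. affn w x y powi (-4)) = integral {0..1-x} (\<lambda>y. (b*y + (a*x + c)) powi (-4))"
      by (simp add: w affn_def algebra_simps)
    also have "\<dots> = slice_integral a b c x"
      using x p nz[of x] unfolding slice_integral_def
      by (subst integral_affine_powi_minus4) (auto simp: Delta_def w affn_def algebra_simps)
    finally show "integral {0..1-x} (\<lambda>y. affn w x y powi (-4)) = slice_integral a b c x" .
  qed
  also have "\<dots> = slice_primitive a b c p - slice_primitive a b c 0"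
  proof (rule integral_unique, rule fundamental_theorem_of_calculus)
    show "0 \<le> p" using p by simp
    fix x assume "x \<in> {0..p}"
    then have "(slice_primitive a b c has_real_derivative slice_integral a b c x) (at x)"
      using A B c d by (intro has_real_derivative_slice_primitive) auto
    then show "(slice_primitive a b c has_vector_derivative slice_integral a b c x) (at x within {0..p})"
      using has_real_derivative_iff_has_vector_derivative has_vector_derivative_at_within by blast
  qed
  also have "\<dots> = slice_primitive a b c p" by (simp add: slice_primitive_def)
  also have "\<dots> = area_poly p (affn w 0 0) (affn w p 0) (affn w p (1 - p)) (affn w 0 1)
             / (6 * (affn w 0 0 * affn w p 0 * affn w p (1 - p) * affn w 0 1)^2)"
    unfolding slice_primitive_def area_poly_def w affn_def fst_conv snd_conv
    by (intro arg_cong2[where f = "(/)"]) algebra+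
  finally show ?thesis .
qed

definition bdry_poly :: "real \<Rightarrow> real \<Rightarrow> real \<Rightarrow> real \<Rightarrow> real \<Rightarrow> real" where
  "bdry_poly p f1 f2 f3 f4 = p*f3*f4 + (1 - p)*f1*f4 + p*f1*f2 + f2*f3"

definition E_closed :: "real \<Rightarrow> real \<Rightarrow> real \<Rightarrow> real \<Rightarrow> real \<Rightarrow> real" where
  "E_closed p f1 f2 f3 f4 = 48 * pi\<^sup>2 * ((bdry_poly p f1 f2 f3 f4)\<^sup>2 / area_poly p f1 f2 f3 f4)"

lemma E_eq_E_closed:
  assumes p: "0 < p" "p < 1" and nz: "\<And>x y. (x, y) \<in> Delta p \<Longrightarrow> affn w x y \<noteq> 0"
  shows "E p w = E_closed p (affn w 0 0) (affn w p 0) (affn w p (1 - p)) (affn w 0 1)"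
proof -
  define f1 f2 f3 f4 where "f1 = affn w 0 0" and "f2 = affn w p 0" and "f3 = affn w p (1 - p)"
    and "f4 = affn w 0 1"
  have f: "f1 \<noteq> 0" "f2 \<noteq> 0" "f3 \<noteq> 0" "f4 \<noteq> 0"
    using nz vertices_in_Delta[OF p] unfolding f1_def f2_def f3_def f4_def by auto
  have "bdry_integral p (\<lambda>x y. affn w x y powi (-2))
          = p / (f1 * f2) + (1 - p) / (f2 * f3) + p / (f4 * f3) + 1 / (f1 * f4)"
    using bdry_integral_affn_powi_minus2[OF p nz] by (simp add: f1_def f2_def f3_def f4_def)
  also have "\<dots> = bdry_poly p f1 f2 f3 f4 / (f1 * f2 * f3 * f4)"
    using f by (simp add: bdry_poly_def field_simps)
  finally have B: "bdry_integral p (\<lambda>x y. affn w x y powi (-2)) = bdry_poly p f1 f2 f3 f4 / (f1 * f2 * f3 * f4)" .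
  have A: "integral (Delta p) (\<lambda>(x, y). affn w x y powi (-4))
             = area_poly p f1 f2 f3 f4 / (6 * (f1 * f2 * f3 * f4)\<^sup>2)"
    using integral_Delta_affn_powi_minus4[OF p nz] by (simp add: f1_def f2_def f3_def f4_def)
  have "E p w = 8 * pi\<^sup>2 * (bdry_poly p f1 f2 f3 f4 / (f1 * f2 * f3 * f4))\<^sup>2
                / (area_poly p f1 f2 f3 f4 / (6 * (f1 * f2 * f3 * f4)\<^sup>2))"
    unfolding E_def B A ..
  also have "\<dots> = E_closed p f1 f2 f3 f4"
    using f unfolding E_closed_def
    by (cases "area_poly p f1 f2 f3 f4 = 0") (simp_all add: field_simps power2_eq_square)
  finally show ?thesis unfolding f1_def f2_def f3_def f4_def .
qed

section \<open>Critical points of the closed form\<close>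

lemma has_derivative_affn [derivative_intros]: "((\<lambda>w. affn w x y) has_derivative (\<lambda>h. affn h x y)) (at v within S)"
  unfolding affn_def by (auto intro!: derivative_eq_intros)

definition bdry_poly_deriv :: "real \<Rightarrow> real \<Rightarrow> real \<Rightarrow> real \<Rightarrow> real \<Rightarrow> real \<Rightarrow> real \<Rightarrow> real \<Rightarrow> real \<Rightarrow> real" where
  "bdry_poly_deriv p f1 f2 f3 f4 e1 e2 e3 e4 =
     p*(e3*f4 + f3*e4) + (1 - p)*(e1*f4 + f1*e4) + p*(e1*f2 + f1*e2) + (e2*f3 + f2*e3)"

definition area_poly_deriv :: "real \<Rightarrow> real \<Rightarrow> real \<Rightarrow> real \<Rightarrow> real \<Rightarrow> real \<Rightarrow> real \<Rightarrow> real \<Rightarrow> real \<Rightarrow> real" where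
  "area_poly_deriv p f1 f2 f3 f4 e1 e2 e3 e4 =
     p*(1 - p)*((e2*f3 + f2*e3 + e1*f3 + f1*e3 + e1*f2 + f1*e2)*f4^2 + (f2*f3 + f1*f3 + f1*f2)*(2*f4*e4))
   + p*((e3*f4 + f3*e4 + e1*f4 + f1*e4 + e1*f3 + f1*e3)*f2^2 + (f3*f4 + f1*f4 + f1*f3)*(2*f2*e2))"

lemma has_derivative_bdry_poly [derivative_intros]:
  assumes "(f1 has_derivative f1') (at x within S)" "(f2 has_derivative f2') (at x within S)"
    "(f3 has_derivative f3') (at x within S)" "(f4 has_derivative f4') (at x within S)"
  shows "((\<lambda>x. bdry_poly p (f1 x) (f2 x) (f3 x) (f4 x)) has_derivative
           (\<lambda>h. bdry_poly_deriv p (f1 x) (f2 x) (f3 x) (f4 x) (f1' h) (f2' h) (f3' h) (f4' h))) (at x within S)"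
  unfolding bdry_poly_def bdry_poly_deriv_def
  by (rule has_derivative_eq_rhs, (rule derivative_eq_intros assms refl)+) (simp add: algebra_simps)

lemma has_derivative_area_poly [derivative_intros]:
  assumes "(f1 has_derivative f1') (at x within S)" "(f2 has_derivative f2') (at x within S)"
    "(f3 has_derivative f3') (at x within S)" "(f4 has_derivative f4') (at x within S)"
  shows "((\<lambda>x. area_poly p (f1 x) (f2 x) (f3 x) (f4 x)) has_derivative
           (\<lambda>h. area_poly_deriv p (f1 x) (f2 x) (f3 x) (f4 x) (f1' h) (f2' h) (f3' h) (f4' h))) (at x within S)"
  unfolding area_poly_def area_poly_deriv_def
  by (rule has_derivative_eq_rhs, (rule derivative_eq_intros assms refl)+) (simp add: algebra_simps)

lemma has_derivative_square_divide_zero: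
  fixes B D :: "'a::real_normed_vector \<Rightarrow> real"
  assumes B: "(B has_derivative B') (at v)" and D: "(D has_derivative D') (at v)" and "D v \<noteq> 0"
    and stationary: "\<And>h. 2 * D v * B' h = B v * D' h"
  shows "((\<lambda>w. k * ((B w)\<^sup>2 / D w)) has_derivative (\<lambda>h. 0)) (at v)"
proof -
  have "((\<lambda>w. k * ((B w)\<^sup>2 / D w)) has_derivative
          (\<lambda>h. (k * (2 * (B v * B' h)) * D v - k * (B v * B v) * D' h) / (D v * D v))) (at v)"
    using \<open>D v \<noteq> 0\<close> by (auto intro!: derivative_eq_intros B D simp: power2_eq_square)
  moreover have "k * (2 * (B v * B' h)) * D v - k * (B v * B v) * D' h = 0" for h
    using stationary[of h] by (simp add: algebra_simps)
  ultimately show ?thesis by simp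
qed

lemma area_poly_pos:
  assumes p: "0 < p" "p < 1"
    and same_sign: "\<And>i j. i \<in> {f1, f2, f3, f4} \<Longrightarrow> j \<in> {f1, f2, f3, f4} \<Longrightarrow> 0 < i * j"
  shows "0 < area_poly p f1 f2 f3 f4"
proof -
  have "0 < p * (1 - p) * (f2*f3 + f1*f3 + f1*f2) * f4^2"
    using p same_sign by (simp add: power2_eq_square add_pos_pos)
  moreover have "0 < p * (f3*f4 + f1*f4 + f1*f3) * f2^2"
    using p same_sign by (simp add: power2_eq_square add_pos_pos)
  ultimately show ?thesis unfolding area_poly_def by simp
qed

text \<open>The derivative of \<open>bdry_poly\<^sup>2 / area_poly\<close> in the direction of the vertex values \<open>e\<close> is
  \<open>bdry_poly * (2 * area_poly * bdry_poly_deriv e - bdry_poly * area_poly_deriv e) / area_poly\<^sup>2\<close>;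
  since vertex values depend linearly on the affine function, these are the only directions that occur.\<close>

definition E_closed_stationary :: "real \<Rightarrow> real \<Rightarrow> real \<Rightarrow> real \<Rightarrow> real \<Rightarrow> bool" where
  "E_closed_stationary p f1 f2 f3 f4 \<longleftrightarrow> (\<forall>h.
     2 * area_poly p f1 f2 f3 f4
       * bdry_poly_deriv p f1 f2 f3 f4 (affn h 0 0) (affn h p 0) (affn h p (1 - p)) (affn h 0 1)
     = bdry_poly p f1 f2 f3 f4
       * area_poly_deriv p f1 f2 f3 f4 (affn h 0 0) (affn h p 0) (affn h p (1 - p)) (affn h 0 1))"

lemma E_closed_stationaryI:
  assumes "\<And>a b c. 2 * area_poly p f1 f2 f3 f4
              * bdry_poly_deriv p f1 f2 f3 f4 c (a*p + c) (a*p + b*(1 - p) + c) (b + c)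
            = bdry_poly p f1 f2 f3 f4
              * area_poly_deriv p f1 f2 f3 f4 c (a*p + c) (a*p + b*(1 - p) + c) (b + c)"
  shows "E_closed_stationary p f1 f2 f3 f4"
  unfolding E_closed_stationary_def affn_def using assms by simp

lemma critical_if_E_closed_stationary:
  assumes p: "0 < p" "p < 1" and sign: "v \<in> U p \<or> - v \<in> U p"
    and stationary: "E_closed_stationary p (affn v 0 0) (affn v p 0) (affn v p (1 - p)) (affn v 0 1)"
  shows "critical p v"
proof -
  let ?W = "U p \<union> uminus ` U p"
  have W: "open ?W" "v \<in> ?W"
    using sign open_U[OF p] by (auto intro: open_negations image_eqI[where x = "- v"])
  have nz: "affn w x y \<noteq> 0" if "w \<in> ?W" "(x, y) \<in> Delta p" for w x y
    using that unfolding U_def by (auto dest!: bspec[where x = "(x, y)"] simp: affn_def)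
  have "0 < area_poly p (affn v 0 0) (affn v p 0) (affn v p (1 - p)) (affn v 0 1)"
  proof (rule area_poly_pos[OF p])
    show "0 < i * j" if "i \<in> {affn v 0 0, affn v p 0, affn v p (1 - p), affn v 0 1}"
      and "j \<in> {affn v 0 0, affn v p 0, affn v p (1 - p), affn v 0 1}" for i j
      using sign that U_iff_vertices_pos[OF p, of v] U_iff_vertices_pos[OF p, of "- v"]
      by (auto simp: mult_neg_neg)
  qed
  moreover have "((\<lambda>w. bdry_poly p (affn w 0 0) (affn w p 0) (affn w p (1 - p)) (affn w 0 1)) has_derivative
      (\<lambda>h. bdry_poly_deriv p (affn v 0 0) (affn v p 0) (affn v p (1 - p)) (affn v 0 1)
             (affn h 0 0) (affn h p 0) (affn h p (1 - p)) (affn h 0 1))) (at v)"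
    by (intro derivative_intros)
  moreover have "((\<lambda>w. area_poly p (affn w 0 0) (affn w p 0) (affn w p (1 - p)) (affn w 0 1)) has_derivative
      (\<lambda>h. area_poly_deriv p (affn v 0 0) (affn v p 0) (affn v p (1 - p)) (affn v 0 1)
             (affn h 0 0) (affn h p 0) (affn h p (1 - p)) (affn h 0 1))) (at v)"
    by (intro derivative_intros)
  ultimately have "((\<lambda>w. E_closed p (affn w 0 0) (affn w p 0) (affn w p (1 - p)) (affn w 0 1))
                      has_derivative (\<lambda>h. 0)) (at v)"
    using stationary unfolding E_closed_def E_closed_stationary_def
    by (intro has_derivative_square_divide_zero) auto
  then show ?thesis
    unfolding critical_def using W E_eq_E_closed[OF p nz]
    by (auto intro: has_derivative_transform_within_open)
qed

lemma critical_if_vertex_values: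
  assumes p: "0 < p" "p < 1"
    and vertices: "affn v 0 0 = f1" "affn v p 0 = f2" "affn v p (1 - p) = f3" "affn v 0 1 = f4"
    and sign: "(0 < f1 \<and> 0 < f2 \<and> 0 < f3 \<and> 0 < f4) \<or> (f1 < 0 \<and> f2 < 0 \<and> f3 < 0 \<and> f4 < 0)"
    and stationary: "E_closed_stationary p f1 f2 f3 f4"
  shows "(v \<in> U p \<or> - v \<in> U p) \<and> critical p v"
proof
  show U: "v \<in> U p \<or> - v \<in> U p"
    using sign vertices U_iff_vertices_pos[OF p, of v] U_iff_vertices_pos[OF p, of "- v"] by auto
  show "critical p v"
    using critical_if_E_closed_stationary[OF p U] stationary vertices by simp
qed

section \<open>The three families\<close>

lemmas E_closed_poly_defs = area_poly_def bdry_poly_def area_poly_deriv_def bdry_poly_deriv_def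

lemma E_closed_stationary_family1:
  assumes "s\<^sup>2 = 1 - p"
  shows "E_closed_stationary p (-(1 + s)) (-s*(1 + s)) (-s*(1 + s)) (-(1 + s))"
  by (rule E_closed_stationaryI, unfold E_closed_poly_defs) (use assms in algebra)

lemma E_closed_stationary_family2:
  assumes "(9*p - 8)*(2*c - p)\<^sup>2 = p*(3*p - 2*c)\<^sup>2"
  shows "E_closed_stationary p c (c - p) (c - p) c"
  by (rule E_closed_stationaryI, unfold E_closed_poly_defs) (use assms in algebra)

lemma E_closed_stationary_family3:
  assumes "t\<^sup>2 = F p"
  shows "E_closed_stationary p (p\<^sup>2 + 2*p - 2 - t) (p^3 - 3*p\<^sup>2 + 4*p - 2 + t*(p - 1))
           (p^3 - 3*p\<^sup>2 + 4*p - 2 + t*(1 - p)) (p\<^sup>2 + 2*p - 2 + t)"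
  by (rule E_closed_stationaryI, unfold E_closed_poly_defs) (use assms[unfolded F_def] in algebra)

lemma critical_point_family1:
  assumes p: "0 < p" "p < 1"
  shows "let v = (1, 0, p * (1 - sqrt (1 - p)) / (2 * sqrt (1 - p) + p - 2))
         in (v \<in> U p \<or> - v \<in> U p) \<and> critical p v"
proof -
  define s where "s = sqrt (1 - p)"
  have s: "s\<^sup>2 = 1 - p" "0 < s" "s < 1" using p by (auto simp: s_def)
  then have p_eq: "p = 1 - s\<^sup>2" by simp
  have "2 * s + p - 2 = - (1 - s)\<^sup>2" unfolding p_eq by (simp add: power2_eq_square algebra_simps)
  then have "2 * s + p - 2 \<noteq> 0" using s by simp
  moreover have "p * (1 - s) = - (1 + s) * (2 * s + p - 2)"
    unfolding p_eq by (simp add: power2_eq_square algebra_simps)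
  ultimately have c: "p * (1 - s) / (2 * s + p - 2) = - (1 + s)" by (simp add: field_simps)
  define v where "v = (1::real, 0::real, - (1 + s))"
  have vertices: "affn v 0 0 = - (1 + s)" "affn v p 0 = - s * (1 + s)" "affn v p (1 - p) = - s * (1 + s)"
    "affn v 0 1 = - (1 + s)"
    by (simp_all add: v_def affn_def p_eq power2_eq_square algebra_simps)
  have "- s * (1 + s) < 0" using s by simp
  then have "(v \<in> U p \<or> - v \<in> U p) \<and> critical p v"
    using s by (intro critical_if_vertex_values[OF p vertices _ E_closed_stationary_family1[OF s(1)]]) auto
  then show ?thesis unfolding Let_def s_def[symmetric] c v_def .
qed

lemma critical_point_family2:
  assumes p: "8/9 < p" "p < 1" and \<sigma>: "\<sigma> \<in> {1, -1::real}"
  shows "let r = sqrt (9 * p\<^sup>2 - 8 * p);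
             v = (-1, 0, p * (3 * p + \<sigma> * r) / (2 * (p + \<sigma> * r)))
         in (v \<in> U p \<or> - v \<in> U p) \<and> critical p v"
proof -
  have p0: "0 < p" "p < 1" using p by auto
  define r where "r = sqrt (9 * p\<^sup>2 - 8 * p)"
  have disc: "0 < 9 * p\<^sup>2 - 8 * p" "9 * p\<^sup>2 - 8 * p < p\<^sup>2"
    using mult_pos_pos[of p "9 * p - 8"] mult_pos_pos[of "8 * p" "1 - p"] p
    by (simp_all add: power2_eq_square algebra_simps)
  have r: "0 \<le> r" "r < p"
    using real_sqrt_less_mono[OF disc(2)] disc(1) p0 by (simp_all add: r_def)
  define u where "u = \<sigma> * r"
  have u2: "u\<^sup>2 = 9 * p\<^sup>2 - 8 * p" using \<sigma> disc(1) by (auto simp: u_def r_def power_mult_distrib)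
  have u: "0 < p + u" "0 < p - u" using \<sigma> r by (auto simp: u_def)
  define c where "c = p * (3 * p + u) / (2 * (p + u))"
  have c: "0 < c" "0 < c - p"
  proof -
    have "c - p = p * (p - u) / (2 * (p + u))" using u by (simp add: c_def field_simps)
    then show "0 < c - p" using u p0 by simp
    then show "0 < c" using p0 by simp
  qed
  have quadratic: "(9*p - 8)*(2*c - p)\<^sup>2 = p*(3*p - 2*c)\<^sup>2"
  proof -
    have "u * (2*c - p) = p * (3*p - 2*c)"
      using u by (simp add: c_def field_simps)
    then have "u\<^sup>2 * (2*c - p)\<^sup>2 = p\<^sup>2 * (3*p - 2*c)\<^sup>2" by (metis power_mult_distrib)
    then have "p * ((9*p - 8)*(2*c - p)\<^sup>2) = p * (p*(3*p - 2*c)\<^sup>2)"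
      unfolding u2 by (simp add: power2_eq_square algebra_simps)
    then show ?thesis using p0 by simp
  qed
  define v where "v = (-1::real, 0::real, c)"
  have vertices: "affn v 0 0 = c" "affn v p 0 = c - p" "affn v p (1 - p) = c - p" "affn v 0 1 = c"
    by (simp_all add: v_def affn_def)
  have "(v \<in> U p \<or> - v \<in> U p) \<and> critical p v"
    using c by (intro critical_if_vertex_values[OF p0 vertices _ E_closed_stationary_family2[OF quadratic]]) auto
  then show ?thesis unfolding Let_def r_def[symmetric] u_def[symmetric] c_def[symmetric] v_def .
qed

lemma neg_if_mult_pos_add_neg:
  fixes x y :: real
  assumes "0 < x * y" "x + y < 0"
  shows "x < 0" "y < 0"
  using assms zero_less_mult_iff[of x y] by linarith+

lemma critical_point_family3:
  assumes p: "0 < p" "p < 2/5" and F: "0 < F p" and \<sigma>: "\<sigma> \<in> {1, -1::real}"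
  shows "let s = sqrt (F p);
             v = (p\<^sup>2 - 4 * p + 2 + \<sigma> * s, \<sigma> * 2 * s, p\<^sup>2 + 2 * p - 2 - \<sigma> * s)
         in (v \<in> U p \<or> - v \<in> U p) \<and> critical p v"
proof -
  have p0: "0 < p" "p < 1" using p by auto
  define t where "t = \<sigma> * sqrt (F p)"
  have t2: "t\<^sup>2 = F p" using \<sigma> F by (auto simp: t_def power_mult_distrib)
  define v where "v = (p\<^sup>2 - 4 * p + 2 + t, 2 * t, p\<^sup>2 + 2 * p - 2 - t)"
  define f1 f2 f3 f4 where "f1 = p\<^sup>2 + 2*p - 2 - t" and "f2 = p^3 - 3*p\<^sup>2 + 4*p - 2 + t*(p - 1)"
    and "f3 = p^3 - 3*p\<^sup>2 + 4*p - 2 + t*(1 - p)" and "f4 = p\<^sup>2 + 2*p - 2 + t"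
  have vertices: "affn v 0 0 = f1" "affn v p 0 = f2" "affn v p (1 - p) = f3" "affn v 0 1 = f4"
    unfolding v_def affn_def f1_def f2_def f3_def f4_def
    by (simp_all add: power2_eq_square power3_eq_cube algebra_simps)
  have "f1 * f4 = (p\<^sup>2 + 2*p - 2)\<^sup>2 - t\<^sup>2" unfolding f1_def f4_def by algebra
  then have prod14: "f1 * f4 = 8 * p * (1 - p)\<^sup>2" unfolding t2 F_def by algebra
  have "f2 * f3 = (p^3 - 3*p\<^sup>2 + 4*p - 2)\<^sup>2 - t\<^sup>2 * (1 - p)\<^sup>2" unfolding f2_def f3_def by algebra
  then have prod23: "f2 * f3 = 8 * p * (1 - p)^3" unfolding t2 F_def by algebra
  have "p * p < p" using mult_strict_left_mono[of p 1 p] p0 by simp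
  moreover have "f1 + f4 = 2 * (p * p) + 4 * p - 4" by (simp add: f1_def f4_def power2_eq_square)
  ultimately have sum14: "f1 + f4 < 0" using p by linarith
  have "0 < (p - 1)\<^sup>2 + 1" by (simp add: add_nonneg_pos)
  then have "(p - 1) * ((p - 1)\<^sup>2 + 1) < 0" using p0 by (simp add: mult_neg_pos)
  moreover have "f2 + f3 = 2 * ((p - 1) * ((p - 1)\<^sup>2 + 1))"
    unfolding f2_def f3_def by (simp add: power2_eq_square power3_eq_cube algebra_simps)
  ultimately have sum23: "f2 + f3 < 0" by simp
  have "0 < 8 * p * (1 - p)\<^sup>2" "0 < 8 * p * (1 - p)^3" using p0 by auto
  then have "f1 < 0 \<and> f2 < 0 \<and> f3 < 0 \<and> f4 < 0"
    using neg_if_mult_pos_add_neg[of f1 f4] neg_if_mult_pos_add_neg[of f2 f3] prod14 prod23 sum14 sum23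
    by auto
  moreover have "E_closed_stationary p f1 f2 f3 f4"
    unfolding f1_def f2_def f3_def f4_def by (rule E_closed_stationary_family3[OF t2])
  ultimately have "(v \<in> U p \<or> - v \<in> U p) \<and> critical p v"
    by (intro critical_if_vertex_values[OF p0 vertices]) auto
  then show ?thesis unfolding Let_def v_def t_def by (simp add: algebra_simps)
qed

lemma F_root_le_two_fifths:
  assumes roots: "{x. F x = 0} = {\<alpha>, \<beta>}" and "\<alpha> < \<beta>"
  shows "\<alpha> \<le> 2/5"
proof -
  have "continuous_on {0..2/5} F" unfolding F_def by (intro continuous_intros)
  moreover have "F (2/5) \<le> 0" "0 \<le> F 0" unfolding F_def by (simp_all add: eval_nat_numeral)
  ultimately obtain x where "0 \<le> x" "x \<le> 2/5" "F x = 0"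
    using IVT2'[of F "2/5" 0 0] by auto
  then have "x \<in> {\<alpha>, \<beta>}" using roots by blast
  then show ?thesis using \<open>x \<le> 2/5\<close> \<open>\<alpha> < \<beta>\<close> by auto
qed

lemma F_pos_below_roots:
  assumes roots: "{x. F x = 0} = {\<alpha>, \<beta>}" and "\<alpha> < \<beta>" and p: "0 \<le> p" "p < \<alpha>"
  shows "0 < F p"
proof (rule ccontr)
  assume "\<not> 0 < F p"
  moreover have "continuous_on {0..p} F" unfolding F_def by (intro continuous_intros)
  moreover have "0 \<le> F 0" unfolding F_def by simp
  ultimately obtain x where "0 \<le> x" "x \<le> p" "F x = 0"
    using IVT2'[of F p 0 0] p by auto
  then have "x \<in> {\<alpha>, \<beta>}" using roots by blast
  then show False using \<open>x \<le> p\<close> \<open>\<alpha> < \<beta>\<close> p by auto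
qed

theorem mainTheorem5:
  fixes \<alpha> \<beta> :: real
  assumes roots: "{x. F x = 0} = {\<alpha>, \<beta>}" and "0 < \<alpha>" and "\<alpha> < \<beta>" and "\<beta> < 1"
  shows
  "(\<forall>p. 0 < p \<and> p < 1 \<longrightarrow>
      (let v = (1, 0, p * (1 - sqrt (1 - p)) / (2 * sqrt (1 - p) + p - 2))
       in (v \<in> U p \<or> - v \<in> U p) \<and> critical p v))
   \<and> (\<forall>p. 8/9 < p \<and> p < 1 \<longrightarrow>
      (\<forall>\<sigma> \<in> {1, -1::real}.
        let r = sqrt (9 * p\<^sup>2 - 8 * p);
            v = (-1, 0, p * (3 * p + \<sigma> * r) / (2 * (p + \<sigma> * r)))
        in (v \<in> U p \<or> - v \<in> U p) \<and> critical p v))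
   \<and> (\<forall>p. 0 < p \<and> p < \<alpha> \<longrightarrow>
      (\<forall>\<sigma> \<in> {1, -1::real}.
        let s = sqrt (F p);
            v = (p\<^sup>2 - 4 * p + 2 + \<sigma> * s, \<sigma> * 2 * s, p\<^sup>2 + 2 * p - 2 - \<sigma> * s)
        in (v \<in> U p \<or> - v \<in> U p) \<and> critical p v))"
proof -
  have "p < 2/5 \<and> 0 < F p" if "0 < p" "p < \<alpha>" for p
    using F_root_le_two_fifths[OF roots \<open>\<alpha> < \<beta>\<close>] F_pos_below_roots[OF roots \<open>\<alpha> < \<beta>\<close>] that by auto
  then show ?thesis
    using critical_point_family1 critical_point_family2 critical_point_family3 by blast
qed

end
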